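(* Let $(P,\le)$ be a finite poset and $v:P\to\mathbb{R}$ a function. In each of the following four cases the given function $d_v:P\times P\to\mathbb{R}$ is a metric on $P$: (i) $\downarrow x\cap\downarrow y\neq\emptyset$ for all $x,y\in P$ and $v$ is a strictly isotone lower valuation; $d_v(x,y)=v(x)+v(y)-2v^-(x,y)$. (ii) $\uparrow x\cap\uparrow y\neq\emptyset$ for all $x,y\in P$ and $v$ is a strictly antitone lower valuation; $d_v(x,y)=v(x)+v(y)-2v^+(x,y)$. (iii) $\uparrow x\cap\uparrow y\neq\emptyset$ for all $x,y\in P$ and $v$ is a strictly isotone upper valuation; $d_v(x,y)=2v^+(x,y)-v(x)-v(y)$. (iv) $\downarrow x\cap\downarrow y\neq\emptyset$ for all $x,y\in P$ and $v$ is a strictly antitone upper valuation; $d_v(x,y)=2v^-(x,y)-v(x)-v(y)$.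
   Context: For a poset $(P,\le)$ and $x\in P$: $\downarrow x=\{x'\in P: x'\le x\}$, $\uparrow x=\{x'\in P: x\le x'\}$. A function $f:P\to\mathbb{R}$ is isotone if $x\le y\Rightarrow f(x)\le f(y)$, strictly isotone if $x<y\Rightarrow f(x)<f(y)$, antitone if $x\le y\Rightarrow f(x)\ge f(y)$, strictly antitone if $x<y\Rightarrow f(x)>f(y)$. For a monotone $f$ and $x,y\in P$ define $f^-(x,y)=\sup\{f(z):z\in\downarrow x\cap\downarrow y\}$ if $f$ is isotone, $=\inf\{f(z):z\in\downarrow x\cap\downarrow y\}$ if $f$ is antitone; $f^+(x,y)=\inf\{f(z):z\in\uparrow x\cap\uparrow y\}$ if $f$ is isotone, $=\sup\{f(z):z\in\uparrow x\cap\uparrow y\}$ if $f$ is antitone; with the conventions $\inf\emptyset=+\infty$, $\sup\emptyset=-\infty$. A lower valuation is either an isotone $v:P\to\mathbb{R}$ such that $\downarrow x\cap\downarrow y\neq\emptyset$ for all $x,y$, or an antitone $v$ such that $\uparrow x\cap\uparrow y\neq\emptyset$ for all $x,y$, satisfying in either case $v(x)+v(y)\le v^-(x,y)+v^+(x,y)$ for all $x,y\in P$. An upper valuation is either an isotone $v$ such that $\uparrow x\cap\uparrow y\neq\emptyset$ for all $x,y$, or an antitone $v$ such that $\downarrow x\cap\downarrow y\neq\emptyset$ for all $x,y$, satisfying in either case $v^-(x,y)+v^+(x,y)\le v(x)+v(y)$ for all $x,y\in P$. *)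

theory Defs
  imports Complex_Main "HOL-Library.Extended_Real"
begin

text \<open>Finite posets are modelled by a finite type of class order.
  Principal down-sets and up-sets.\<close>

definition down :: "'a::order \<Rightarrow> 'a set" where
  "down x = {x'. x' \<le> x}"

definition up :: "'a::order \<Rightarrow> 'a set" where
  "up x = {x'. x \<le> x'}"

definition isotone :: "('a::order \<Rightarrow> real) \<Rightarrow> bool" where
  "isotone f \<longleftrightarrow> (\<forall>x y. x \<le> y \<longrightarrow> f x \<le> f y)"

definition strictly_isotone :: "('a::order \<Rightarrow> real) \<Rightarrow> bool" where
  "strictly_isotone f \<longleftrightarrow> (\<forall>x y. x < y \<longrightarrow> f x < f y)"

definition antitone :: "('a::order \<Rightarrow> real) \<Rightarrow> bool" where
  "antitone f \<longleftrightarrow> (\<forall>x y. x \<le> y \<longrightarrow> f x \<ge> f y)"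

definition strictly_antitone :: "('a::order \<Rightarrow> real) \<Rightarrow> bool" where
  "strictly_antitone f \<longleftrightarrow> (\<forall>x y. x < y \<longrightarrow> f x > f y)"

text \<open>f^- and f^+ (values in the extended reals, so that sup {} = -\<infinity>, inf {} = +\<infinity>),
  in the isotone and in the antitone reading respectively.\<close>

definition fminus_iso :: "('a::order \<Rightarrow> real) \<Rightarrow> 'a \<Rightarrow> 'a \<Rightarrow> ereal" where
  "fminus_iso f x y = Sup ((\<lambda>z. ereal (f z)) ` (down x \<inter> down y))"

definition fminus_anti :: "('a::order \<Rightarrow> real) \<Rightarrow> 'a \<Rightarrow> 'a \<Rightarrow> ereal" where
  "fminus_anti f x y = Inf ((\<lambda>z. ereal (f z)) ` (down x \<inter> down y))"

definition fplus_iso :: "('a::order \<Rightarrow> real) \<Rightarrow> 'a \<Rightarrow> 'a \<Rightarrow> ereal" where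
  "fplus_iso f x y = Inf ((\<lambda>z. ereal (f z)) ` (up x \<inter> up y))"

definition fplus_anti :: "('a::order \<Rightarrow> real) \<Rightarrow> 'a \<Rightarrow> 'a \<Rightarrow> ereal" where
  "fplus_anti f x y = Sup ((\<lambda>z. ereal (f z)) ` (up x \<inter> up y))"

definition lower_valuation :: "('a::order \<Rightarrow> real) \<Rightarrow> bool" where
  "lower_valuation v \<longleftrightarrow>
     (isotone v \<and> (\<forall>x y::'a. down x \<inter> down y \<noteq> {}) \<and>
        (\<forall>x y. ereal (v x) + ereal (v y) \<le> fminus_iso v x y + fplus_iso v x y))
   \<or> (antitone v \<and> (\<forall>x y::'a. up x \<inter> up y \<noteq> {}) \<and>
        (\<forall>x y. ereal (v x) + ereal (v y) \<le> fminus_anti v x y + fplus_anti v x y))"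

definition upper_valuation :: "('a::order \<Rightarrow> real) \<Rightarrow> bool" where
  "upper_valuation v \<longleftrightarrow>
     (isotone v \<and> (\<forall>x y::'a. up x \<inter> up y \<noteq> {}) \<and>
        (\<forall>x y. fminus_iso v x y + fplus_iso v x y \<le> ereal (v x) + ereal (v y)))
   \<or> (antitone v \<and> (\<forall>x y::'a. down x \<inter> down y \<noteq> {}) \<and>
        (\<forall>x y. fminus_anti v x y + fplus_anti v x y \<le> ereal (v x) + ereal (v y)))"

definition is_metric :: "('a \<Rightarrow> 'a \<Rightarrow> real) \<Rightarrow> bool" where
  "is_metric d \<longleftrightarrow>
     (\<forall>x y. d x y \<ge> 0) \<and> (\<forall>x y. d x y = 0 \<longleftrightarrow> x = y) \<and>
     (\<forall>x y. d x y = d y x) \<and> (\<forall>x y z. d x z \<le> d x y + d y z)"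

end

theory Submission
  imports Defs
begin

(* Each of the four distances has the form d(x,y) = v x + v y - 2 m(x,y), where
   (after reversing the order and/or negating v) m(x,y) is the largest value of a
   strictly increasing v on the common lower bounds of x and y.  The metric axioms
   follow from two facts: m(x,y) is attained at a common lower bound, and the
   valuation inequality v x + v y \<le> m(x,y) + v u holds for each common upper
   bound u.  For the triangle inequality, compare meet points a of (x,y), b of
   (y,z) and a meet point of (a,b), with y a common upper bound of a and b.  In each case the valuation may hold in the
   "wrong" (isotone vs. antitone) reading; together with strict monotonicity of
   the opposite kind this makes the order discrete, so the inequality is trivial. *)

lemma Sup_ereal_image_finite:
  assumes "finite S" "S \<noteq> {}"
  shows "Sup ((\<lambda>z. ereal (f z)) ` S) = ereal (Max (f ` S))"
proof -
  have "(\<lambda>z. ereal (f z)) ` S = ereal ` f ` S" by (simp add: image_image)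
  then show ?thesis
    using assms by (simp add: Max_Sup[symmetric] mono_Max_commute[symmetric] mono_def)
qed

lemma Inf_ereal_image_finite:
  assumes "finite S" "S \<noteq> {}"
  shows "Inf ((\<lambda>z. ereal (f z)) ` S) = ereal (Min (f ` S))"
proof -
  have "(\<lambda>z. ereal (f z)) ` S = ereal ` f ` S" by (simp add: image_image)
  then show ?thesis
    using assms by (simp add: Min_Inf[symmetric] mono_Min_commute[symmetric] mono_def)
qed

lemma ereal_sum_le_bound:
  assumes "ereal a + ereal b \<le> ereal c + e" and "e \<le> ereal d"
  shows "a + b \<le> c + d"
proof -
  have "ereal c + e \<le> ereal c + ereal d" using assms(2) by (rule add_left_mono)
  with assms(1) have "ereal (a + b) \<le> ereal (c + d)"
    by (metis order_trans plus_ereal.simps(1))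
  then show ?thesis by simp
qed

lemma ereal_sum_ge_bound:
  assumes "e + ereal c \<le> ereal a + ereal b" and "ereal d \<le> e"
  shows "c + d \<le> a + b"
proof -
  have "ereal d + ereal c \<le> e + ereal c" using assms(2) by (rule add_right_mono)
  with assms(1) have "ereal (d + c) \<le> ereal (a + b)"
    by (metis order_trans plus_ereal.simps(1))
  then show ?thesis by (simp add: add.commute)
qed

lemma down_inter_down: "down x \<inter> down y = {z. z \<le> x \<and> z \<le> y}"
  by (auto simp: down_def)

lemma up_inter_up: "up x \<inter> up y = {z. x \<le> z \<and> y \<le> z}"
  by (auto simp: up_def)

lemma discrete_if_strictly_isotone_antitone:
  fixes v :: "'a::order \<Rightarrow> real" and x y :: 'a
  assumes "strictly_isotone v" "antitone v" "x \<le> y"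
  shows "x = y"
proof (rule ccontr)
  assume "x \<noteq> y"
  with assms(3) have "x < y" by (simp add: order.strict_iff_order)
  with assms(1,2) show False unfolding strictly_isotone_def antitone_def by (metis linorder_not_le order_less_imp_le)
qed

lemma discrete_if_strictly_antitone_isotone:
  fixes v :: "'a::order \<Rightarrow> real" and x y :: 'a
  assumes "strictly_antitone v" "isotone v" "x \<le> y"
  shows "x = y"
proof (rule ccontr)
  assume "x \<noteq> y"
  with assms(3) have "x < y" by (simp add: order.strict_iff_order)
  with assms(1,2) show False unfolding strictly_antitone_def isotone_def by (metis linorder_not_le order_less_imp_le)
qed

section \<open>Metrics from meet values on a finite preorder\<close>

locale meet_valuation =
  fixes le :: "'a::finite \<Rightarrow> 'a \<Rightarrow> bool" and v :: "'a \<Rightarrow> real"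
  assumes le_refl: "le x x"
    and le_trans: "le x y \<Longrightarrow> le y z \<Longrightarrow> le x z"
    and lower_bound_exists: "\<exists>z. le z x \<and> le z y"
    and strictly_increasing: "le x y \<Longrightarrow> x \<noteq> y \<Longrightarrow> v x < v y"
    and valuation_ineq:
      "le x u \<Longrightarrow> le y u \<Longrightarrow> v x + v y \<le> Max (v ` {z. le z x \<and> le z y}) + v u"
begin

definition meet_value :: "'a \<Rightarrow> 'a \<Rightarrow> real" where
  "meet_value x y = Max (v ` {z. le z x \<and> le z y})"

lemma meet_value_attained: "\<exists>z. le z x \<and> le z y \<and> v z = meet_value x y"
proof -
  have "v ` {z. le z x \<and> le z y} \<noteq> {}" using lower_bound_exists[of x y] by auto
  then have "meet_value x y \<in> v ` {z. le z x \<and> le z y}"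
    unfolding meet_value_def by (intro Max_in) auto
  then show ?thesis by auto
qed

lemma meet_value_upper: "le z x \<Longrightarrow> le z y \<Longrightarrow> v z \<le> meet_value x y"
  unfolding meet_value_def by (intro Max_ge) auto

lemma increasing: "le x y \<Longrightarrow> v x \<le> v y"
  using strictly_increasing[of x y] by (cases "x = y") auto

lemma meet_value_le_left: "meet_value x y \<le> v x"
  and meet_value_le_right: "meet_value x y \<le> v y"
  using meet_value_attained[of x y] increasing by force+

lemma meet_value_diag: "meet_value x x = v x"
  using meet_value_le_left[of x x] meet_value_upper[of x x x] le_refl by force

lemma meet_value_sym: "meet_value x y = meet_value y x"
  unfolding meet_value_def by (simp add: conj_commute)

text \<open>Equality \<open>meet_value x y = v x = v y\<close> forces \<open>x = y\<close>: the attaining lower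
  bound has the same value as \<open>x\<close> and \<open>y\<close>, so by strictness it equals both.\<close>

lemma meet_value_eq_imp_eq:
  assumes "meet_value x y = v x" "meet_value x y = v y"
  shows "x = y"
proof -
  obtain z where z: "le z x" "le z y" "v z = meet_value x y"
    using meet_value_attained by blast
  have "z = x" using strictly_increasing[OF z(1)] z(3) assms(1) by force
  moreover have "z = y" using strictly_increasing[OF z(2)] z(3) assms(2) by force
  ultimately show ?thesis by simp
qed

text \<open>Triangle inequality: with \<open>a\<close>, \<open>b\<close> meet points of \<open>(x,y)\<close> and \<open>(y,z)\<close>,
  the valuation inequality for \<open>a, b \<le> y\<close> gives
  \<open>m(x,y) + m(y,z) \<le> m(a,b) + v y \<le> m(x,z) + v y\<close>.\<close>

lemma meet_value_triangle: "meet_value x y + meet_value y z \<le> meet_value x z + v y"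
proof -
  obtain a where a: "le a x" "le a y" "v a = meet_value x y"
    using meet_value_attained by blast
  obtain b where b: "le b y" "le b z" "v b = meet_value y z"
    using meet_value_attained by blast
  obtain c where c: "le c a" "le c b" "v c = meet_value a b"
    using meet_value_attained by blast
  have "v a + v b \<le> meet_value a b + v y"
    using valuation_ineq[OF a(2) b(1)] unfolding meet_value_def .
  moreover have "meet_value a b \<le> meet_value x z"
    using meet_value_upper[of c x z] c a b le_trans by metis
  ultimately show ?thesis using a(3) b(3) by linarith
qed

theorem metric: "is_metric (\<lambda>x y. v x + v y - 2 * meet_value x y)"
  unfolding is_metric_def
proof (intro conjI allI)
  fix x y
  show "0 \<le> v x + v y - 2 * meet_value x y"
    using meet_value_le_left[of x y] meet_value_le_right[of x y] by linarith
  show "v x + v y - 2 * meet_value x y = 0 \<longleftrightarrow> x = y"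
    using meet_value_le_left[of x y] meet_value_le_right[of x y]
      meet_value_eq_imp_eq[of x y] meet_value_diag[of x] by fastforce
  show "v x + v y - 2 * meet_value x y = v y + v x - 2 * meet_value y x"
    by (simp add: meet_value_sym)
next
  fix x y z
  show "v x + v z - 2 * meet_value x z
        \<le> v x + v y - 2 * meet_value x y + (v y + v z - 2 * meet_value y z)"
    using meet_value_triangle[of x y z] by linarith
qed

end

text \<open>The dual statement for join values, obtained by reversing the preorder and
  negating \<open>v\<close>: the maximum of \<open>-v\<close> over common upper bounds is minus the minimum
  of \<open>v\<close> there.\<close>

lemma join_valuation_metric:
  fixes le :: "'a::finite \<Rightarrow> 'a \<Rightarrow> bool" and v :: "'a \<Rightarrow> real"
  assumes le_refl: "\<And>x. le x x"
    and le_trans: "\<And>x y z. le x y \<Longrightarrow> le y z \<Longrightarrow> le x z"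
    and upper_bound_exists: "\<And>x y. \<exists>z. le x z \<and> le y z"
    and strictly_increasing: "\<And>x y. le x y \<Longrightarrow> x \<noteq> y \<Longrightarrow> v x < v y"
    and valuation_ineq: "\<And>x y u. le u x \<Longrightarrow> le u y \<Longrightarrow>
      Min (v ` {z. le x z \<and> le y z}) + v u \<le> v x + v y"
  shows "is_metric (\<lambda>x y. 2 * Min (v ` {z. le x z \<and> le y z}) - v x - v y)"
proof -
  have neg_Max: "Max ((\<lambda>z. - v z) ` {z. le x z \<and> le y z}) = - Min (v ` {z. le x z \<and> le y z})"
    for x y
    using upper_bound_exists[of x y] by (subst minus_Min_eq_Max) (auto simp: image_image)
  interpret reversed: meet_valuation "\<lambda>a b. le b a" "\<lambda>z. - v z"
  proof unfold_locales
    show "- v x + - v y \<le> Max ((\<lambda>z. - v z) ` {z. le x z \<and> le y z}) + - v u"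
      if "le u x" "le u y" for x y u
      using valuation_ineq[OF that] unfolding neg_Max by simp
  qed (use assms in auto)
  show ?thesis
    using reversed.metric unfolding reversed.meet_value_def neg_Max
    by (simp add: algebra_simps)
qed

lemma metric_strictly_isotone_lower_valuation:
  fixes v :: "'a::{order,finite} \<Rightarrow> real"
  assumes down_meet: "\<forall>x y::'a. down x \<inter> down y \<noteq> {}"
    and strict: "strictly_isotone v" and val: "lower_valuation v"
  shows "is_metric (\<lambda>x y. v x + v y - 2 * real_of_ereal (fminus_iso v x y))"
proof -
  have lower_bound: "\<exists>z. z \<le> x \<and> z \<le> y" for x y :: 'a
    using down_meet by (auto simp: down_def)
  have fminus: "fminus_iso v x y = ereal (Max (v ` {z. z \<le> x \<and> z \<le> y}))" for x y
    unfolding fminus_iso_def down_inter_down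
    using lower_bound[of x y] by (intro Sup_ereal_image_finite) auto
  have ineq: "v x + v y \<le> Max (v ` {z. z \<le> x \<and> z \<le> y}) + v u" if "x \<le> u" "y \<le> u" for x y u
    using val unfolding lower_valuation_def
  proof (elim disjE conjE)
    assume "\<forall>x y. ereal (v x) + ereal (v y) \<le> fminus_iso v x y + fplus_iso v x y"
    then have "ereal (v x) + ereal (v y) \<le> ereal (Max (v ` {z. z \<le> x \<and> z \<le> y})) + fplus_iso v x y"
      using fminus by metis
    moreover have "fplus_iso v x y \<le> ereal (v u)"
      unfolding fplus_iso_def up_inter_up using that by (intro Inf_lower) auto
    ultimately show ?thesis by (rule ereal_sum_le_bound)
  next
    assume "antitone v"
    then have "x = u" "y = u"
      using that strict discrete_if_strictly_isotone_antitone by blast+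
    then show ?thesis by (auto intro: Max_ge)
  qed
  interpret meet_valuation "(\<le>)" v
    by unfold_locales (use lower_bound ineq strict in \<open>auto simp: strictly_isotone_def\<close>)
  show ?thesis
    using metric unfolding meet_value_def fminus by simp
qed

lemma metric_strictly_antitone_lower_valuation:
  fixes v :: "'a::{order,finite} \<Rightarrow> real"
  assumes up_meet: "\<forall>x y::'a. up x \<inter> up y \<noteq> {}"
    and strict: "strictly_antitone v" and val: "lower_valuation v"
  shows "is_metric (\<lambda>x y. v x + v y - 2 * real_of_ereal (fplus_anti v x y))"
proof -
  have upper_bound: "\<exists>z. x \<le> z \<and> y \<le> z" for x y :: 'a
    using up_meet by (auto simp: up_def)
  have fplus: "fplus_anti v x y = ereal (Max (v ` {z. x \<le> z \<and> y \<le> z}))" for x y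
    unfolding fplus_anti_def up_inter_up
    using upper_bound[of x y] by (intro Sup_ereal_image_finite) auto
  have ineq: "v x + v y \<le> Max (v ` {z. x \<le> z \<and> y \<le> z}) + v u" if "u \<le> x" "u \<le> y" for x y u
    using val unfolding lower_valuation_def
  proof (elim disjE conjE)
    assume "\<forall>x y. ereal (v x) + ereal (v y) \<le> fminus_anti v x y + fplus_anti v x y"
    then have "ereal (v x) + ereal (v y) \<le> ereal (Max (v ` {z. x \<le> z \<and> y \<le> z})) + fminus_anti v x y"
      using fplus by (metis add.commute)
    moreover have "fminus_anti v x y \<le> ereal (v u)"
      unfolding fminus_anti_def down_inter_down using that by (intro Inf_lower) auto
    ultimately show ?thesis by (rule ereal_sum_le_bound)
  next
    assume "isotone v"
    then have "x = u" "y = u"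
      using that strict discrete_if_strictly_antitone_isotone by blast+
    then show ?thesis by (auto intro: Max_ge)
  qed
  interpret meet_valuation "\<lambda>a b. b \<le> a" v
    by unfold_locales (use upper_bound ineq strict in \<open>auto simp: strictly_antitone_def\<close>)
  show ?thesis
    using metric unfolding meet_value_def fplus by simp
qed

lemma metric_strictly_isotone_upper_valuation:
  fixes v :: "'a::{order,finite} \<Rightarrow> real"
  assumes up_meet: "\<forall>x y::'a. up x \<inter> up y \<noteq> {}"
    and strict: "strictly_isotone v" and val: "upper_valuation v"
  shows "is_metric (\<lambda>x y. 2 * real_of_ereal (fplus_iso v x y) - v x - v y)"
proof -
  have upper_bound: "\<exists>z. x \<le> z \<and> y \<le> z" for x y :: 'a
    using up_meet by (auto simp: up_def)
  have fplus: "fplus_iso v x y = ereal (Min (v ` {z. x \<le> z \<and> y \<le> z}))" for x y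
    unfolding fplus_iso_def up_inter_up
    using upper_bound[of x y] by (intro Inf_ereal_image_finite) auto
  have ineq: "Min (v ` {z. x \<le> z \<and> y \<le> z}) + v u \<le> v x + v y" if "u \<le> x" "u \<le> y" for x y u
    using val unfolding upper_valuation_def
  proof (elim disjE conjE)
    assume "\<forall>x y. fminus_iso v x y + fplus_iso v x y \<le> ereal (v x) + ereal (v y)"
    then have "fminus_iso v x y + ereal (Min (v ` {z. x \<le> z \<and> y \<le> z})) \<le> ereal (v x) + ereal (v y)"
      using fplus by metis
    moreover have "ereal (v u) \<le> fminus_iso v x y"
      unfolding fminus_iso_def down_inter_down using that by (intro Sup_upper) auto
    ultimately show ?thesis by (rule ereal_sum_ge_bound)
  next
    assume "antitone v"
    then have "x = u" "y = u"
      using that strict discrete_if_strictly_isotone_antitone by blast+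
    then show ?thesis by (auto intro: Min_le)
  qed
  have "is_metric (\<lambda>x y. 2 * Min (v ` {z. x \<le> z \<and> y \<le> z}) - v x - v y)"
    by (rule join_valuation_metric)
      (use upper_bound ineq strict in \<open>auto simp: strictly_isotone_def\<close>)
  then show ?thesis by (simp add: fplus)
qed

lemma metric_strictly_antitone_upper_valuation:
  fixes v :: "'a::{order,finite} \<Rightarrow> real"
  assumes down_meet: "\<forall>x y::'a. down x \<inter> down y \<noteq> {}"
    and strict: "strictly_antitone v" and val: "upper_valuation v"
  shows "is_metric (\<lambda>x y. 2 * real_of_ereal (fminus_anti v x y) - v x - v y)"
proof -
  have lower_bound: "\<exists>z. z \<le> x \<and> z \<le> y" for x y :: 'a
    using down_meet by (auto simp: down_def)
  have fminus: "fminus_anti v x y = ereal (Min (v ` {z. z \<le> x \<and> z \<le> y}))" for x y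
    unfolding fminus_anti_def down_inter_down
    using lower_bound[of x y] by (intro Inf_ereal_image_finite) auto
  have ineq: "Min (v ` {z. z \<le> x \<and> z \<le> y}) + v u \<le> v x + v y" if "x \<le> u" "y \<le> u" for x y u
    using val unfolding upper_valuation_def
  proof (elim disjE conjE)
    assume "isotone v"
    then have "x = u" "y = u"
      using that strict discrete_if_strictly_antitone_isotone by blast+
    then show ?thesis by (auto intro: Min_le)
  next
    assume "\<forall>x y. fminus_anti v x y + fplus_anti v x y \<le> ereal (v x) + ereal (v y)"
    then have "fplus_anti v x y + ereal (Min (v ` {z. z \<le> x \<and> z \<le> y})) \<le> ereal (v x) + ereal (v y)"
      using fminus by (metis add.commute)
    moreover have "ereal (v u) \<le> fplus_anti v x y"
      unfolding fplus_anti_def up_inter_up using that by (intro Sup_upper) auto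
    ultimately show ?thesis by (rule ereal_sum_ge_bound)
  qed
  have "is_metric (\<lambda>x y. 2 * Min (v ` {z. z \<le> x \<and> z \<le> y}) - v x - v y)"
    by (rule join_valuation_metric[where le = "\<lambda>a b. b \<le> a"])
      (use lower_bound ineq strict in \<open>auto simp: strictly_antitone_def\<close>)
  then show ?thesis by (simp add: fminus)
qed

theorem mainTheorem1:
  fixes v :: "'a::{order,finite} \<Rightarrow> real"
  shows
   "((\<forall>x y::'a. down x \<inter> down y \<noteq> {}) \<and> strictly_isotone v \<and> lower_valuation v \<longrightarrow>
       is_metric (\<lambda>x y. v x + v y - 2 * real_of_ereal (fminus_iso v x y)))
  \<and> ((\<forall>x y::'a. up x \<inter> up y \<noteq> {}) \<and> strictly_antitone v \<and> lower_valuation v \<longrightarrow>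
       is_metric (\<lambda>x y. v x + v y - 2 * real_of_ereal (fplus_anti v x y)))
  \<and> ((\<forall>x y::'a. up x \<inter> up y \<noteq> {}) \<and> strictly_isotone v \<and> upper_valuation v \<longrightarrow>
       is_metric (\<lambda>x y. 2 * real_of_ereal (fplus_iso v x y) - v x - v y))
  \<and> ((\<forall>x y::'a. down x \<inter> down y \<noteq> {}) \<and> strictly_antitone v \<and> upper_valuation v \<longrightarrow>
       is_metric (\<lambda>x y. 2 * real_of_ereal (fminus_anti v x y) - v x - v y))"
  using metric_strictly_isotone_lower_valuation metric_strictly_antitone_lower_valuation
    metric_strictly_isotone_upper_valuation metric_strictly_antitone_upper_valuation
  by blast

end
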